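(* Let $H$ be a finite-dimensional real Hilbert space with inner product $\cdot$ and norm $\|\cdot\|$. Let $A\in B(H,H)$ be symmetric with $A>0$, and suppose there is $\ell_0>0$ with $\|A^{1/2}\mathbf{u}\|^2\ge \ell_0\|\mathbf{u}\|^2$ for all $\mathbf{u}\in H$. Let $\mathbf{N}:H\to H$ be locally Lipschitz with $\mathbf{N}(\mathbf{u})\cdot\mathbf{u}=0$ for all $\mathbf{u}\in H$. Let $\mathbf{F}(t)\equiv\mathbf{F}\in H$ be time independent and let $\gamma>0$. Let $\mathscr{A}$ denote the global attractor of the original model $\frac{d\mathbf{u}}{dt}+A\mathbf{u}+\mathbf{N}(\mathbf{u})=\mathbf{F}$ on $H$. Then the augmented system on $H\times\mathbb{R}$ $$\frac{d\mathbf{u}}{dt}+A\mathbf{u}+q\,\mathbf{N}(\mathbf{u})=\mathbf{F},\qquad \frac{dq}{dt}-\mathbf{N}(\mathbf{u})\cdot\mathbf{u}=-\gamma q+\gamma,$$ possesses a global attractor $\mathscr{A}_q$, and $\mathscr{A}_q=\mathscr{A}\times\{1\}$.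
   Context: A global attractor is a compact invariant set attracting all bounded sets under the solution semigroup. The original model has a global attractor under these assumptions. *)

theory Defs
  imports "HOL-Analysis.Analysis"
begin

definition fwd_solution :: "('a::real_normed_vector \<Rightarrow> 'a) \<Rightarrow> 'a \<Rightarrow> (real \<Rightarrow> 'a) \<Rightarrow> bool" where
  "fwd_solution f u0 x \<longleftrightarrow> x 0 = u0 \<and>
     (\<forall>t\<ge>0. (x has_vector_derivative f (x t)) (at t within {0..}))"

definition well_posed :: "('a::real_normed_vector \<Rightarrow> 'a) \<Rightarrow> bool" where
  "well_posed f \<longleftrightarrow> (\<forall>u0. \<exists>x. fwd_solution f u0 x \<and>
      (\<forall>y. fwd_solution f u0 y \<longrightarrow> (\<forall>t\<ge>0. y t = x t)))"

text \<open>The solution semigroup S(t) u0 (meaningful for t \<ge> 0 when well_posed f).\<close>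
definition semiflow :: "('a::real_normed_vector \<Rightarrow> 'a) \<Rightarrow> real \<Rightarrow> 'a \<Rightarrow> 'a" where
  "semiflow f t u0 = (THE v. \<exists>x. fwd_solution f u0 x \<and> x t = v)"

definition global_attractor :: "('a::real_normed_vector \<Rightarrow> 'a) \<Rightarrow> 'a set \<Rightarrow> bool" where
  "global_attractor f K \<longleftrightarrow> well_posed f \<and> K \<noteq> {} \<and> compact K \<and>
     (\<forall>t\<ge>0. semiflow f t ` K = K) \<and>
     (\<forall>B. bounded B \<longrightarrow> (\<forall>e>0. \<exists>T. \<forall>t\<ge>T. \<forall>b\<in>B. infdist (semiflow f t b) K < e))"

definition symmetric_op :: "('a::real_inner \<Rightarrow> 'a) \<Rightarrow> bool" where
  "symmetric_op A \<longleftrightarrow> (\<forall>x y. inner (A x) y = inner x (A y))"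

definition original_field :: "('a::real_inner \<Rightarrow> 'a) \<Rightarrow> ('a \<Rightarrow> 'a) \<Rightarrow> 'a \<Rightarrow> 'a \<Rightarrow> 'a" where
  "original_field A N F u = F - A u - N u"

definition augmented_field :: "('a::real_inner \<Rightarrow> 'a) \<Rightarrow> ('a \<Rightarrow> 'a) \<Rightarrow> 'a \<Rightarrow> real \<Rightarrow> 'a \<times> real \<Rightarrow> 'a \<times> real" where
  "augmented_field A N F \<gamma> z = (case z of (u, q) \<Rightarrow>
      (F - A u - q *\<^sub>R N u, inner (N u) u - \<gamma> * q + \<gamma>))"

end

(*
  Since N(u).u = 0, the equation for q decouples into q' = gamma (1 - q), so
  q(t) = 1 + (q0 - 1) exp(-gamma t), and u solves the original model with N replaced by q(t) N.
  The factor q(t) does not affect the energy identity, which gives the absorbing-ball bound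
  |u(t)| <= max |u0| (|F| / c) for the coercivity constant c of A. With this bound, global
  existence follows by Picard iteration for a radially truncated N, and uniqueness from a
  Gronwall estimate for the difference of two solutions. On the line q = 1 the augmented flow is
  the original one, so Att x {1} is invariant. For attraction, run an augmented trajectory for a
  time s, then compare it over the fixed time tau needed by the original attractor with the
  original trajectory through the same point: the Gronwall estimate bounds their distance by
  C(tau) |q0 - 1| exp(-gamma s).
*)

theory Submission
  imports Defs
begin

section \<open>Calculus on \<open>[0, \<infinity>)\<close>\<close>

lemma at_within_atLeastAtMost_eq_atLeast:
  fixes t T :: real
  assumes "0 \<le> t" "t < T"
  shows "at t within {0..T} = at t within {0..}"
  by (rule at_within_nhd[of _ "{..<T}"]) (use assms in auto)

lemma continuous_on_atLeast_0I:
  fixes g :: "real \<Rightarrow> 'a::topological_space"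
  assumes "\<And>T. continuous_on {0..T} g"
  shows "continuous_on {0..} g"
  unfolding continuous_on_eq_continuous_within
proof
  fix t :: real assume t: "t \<in> {0..}"
  then have "continuous (at t within {0..t+1}) g"
    using assms[of "t+1"] by (auto simp: continuous_on_eq_continuous_within)
  then show "continuous (at t within {0..}) g"
    using at_within_atLeastAtMost_eq_atLeast[of t "t+1"] t by (simp add: continuous_within)
qed

lemma integral_has_vector_derivative_atLeast_0:
  fixes h :: "real \<Rightarrow> 'a::banach"
  assumes "continuous_on {0..} h" "0 \<le> t"
  shows "((\<lambda>u. integral {0..u} h) has_vector_derivative h t) (at t within {0..})"
proof -
  have "((\<lambda>u. integral {0..u} h) has_vector_derivative h t) (at t within {0..t+1})"
    by (rule integral_has_vector_derivative) (use assms in \<open>auto intro: continuous_on_subset\<close>)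
  then show ?thesis
    using at_within_atLeastAtMost_eq_atLeast[of t "t+1"] assms(2) by simp
qed

lemma has_vector_derivative_shift_atLeast_0:
  assumes "\<And>t. 0 \<le> t \<Longrightarrow> (x has_vector_derivative x' t) (at t within {0..})"
    and "0 \<le> s" "0 \<le> t"
  shows "((\<lambda>t. x (s + t)) has_vector_derivative x' (s + t)) (at t within {0..})"
proof -
  have "((\<lambda>t. s + t) has_vector_derivative 1) (at t within {0..})"
    by (auto intro!: derivative_eq_intros)
  moreover have "(x has_vector_derivative x' (s + t)) (at (s + t) within (\<lambda>t. s + t) ` {0..})"
    by (rule has_vector_derivative_within_subset[OF assms(1)]) (use assms in auto)
  ultimately show ?thesis
    using vector_diff_chain_within by (force simp: o_def)
qed

lemma has_real_derivative_inner_self: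
  assumes "(w has_vector_derivative w') (at t within S)"
  shows "((\<lambda>t. inner (w t) (w t)) has_real_derivative 2 * inner (w t) w') (at t within S)"
  using bounded_bilinear.has_vector_derivative[OF bounded_bilinear_inner assms assms]
  by (simp add: has_real_derivative_iff_has_vector_derivative inner_commute)

lemma DERIV_nonpos_imp_le_at_0:
  fixes \<phi> :: "real \<Rightarrow> real"
  assumes deriv: "\<And>t. 0 \<le> t \<Longrightarrow> (\<phi> has_real_derivative \<phi>' t) (at t within {0..})"
    and nonpos: "\<And>t. 0 \<le> t \<Longrightarrow> \<phi>' t \<le> 0" and "0 \<le> t"
  shows "\<phi> t \<le> \<phi> 0"
proof (rule DERIV_nonpos_imp_decreasing_open[OF \<open>0 \<le> t\<close>])
  fix s :: real assume s: "0 < s" "s < t"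
  have "at s within {0..} = at s"
    by (rule at_within_interior) (use s in auto)
  then show "\<exists>y. (\<phi> has_real_derivative y) (at s) \<and> y \<le> 0"
    using deriv[of s] nonpos[of s] s by auto
next
  have "continuous_on {0..} \<phi>"
    unfolding continuous_on_eq_continuous_within using deriv DERIV_continuous by fastforce
  then show "continuous_on {0..t} \<phi>"
    by (rule continuous_on_subset) auto
qed

lemma gronwall_linear:
  fixes \<phi> :: "real \<Rightarrow> real"
  assumes deriv: "\<And>t. 0 \<le> t \<Longrightarrow> (\<phi> has_real_derivative \<phi>' t) (at t within {0..})"
    and growth: "\<And>t. 0 \<le> t \<Longrightarrow> \<phi>' t \<le> k * \<phi> t" and "0 \<le> t"
  shows "\<phi> t \<le> exp (k * t) * \<phi> 0"
proof -
  define \<psi> where "\<psi> s = exp (- k * s) * \<phi> s" for s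
  have \<psi>_deriv: "(\<psi> has_real_derivative exp (- k * s) * (\<phi>' s - k * \<phi> s)) (at s within {0..})"
    if "0 \<le> s" for s
    unfolding \<psi>_def using deriv[OF that]
    by (auto intro!: derivative_eq_intros simp: algebra_simps)
  have \<psi>_deriv_nonpos: "exp (- k * s) * (\<phi>' s - k * \<phi> s) \<le> 0" if "0 \<le> s" for s
    using growth[OF that] by (simp add: mult_nonneg_nonpos)
  have "\<psi> t \<le> \<psi> 0"
    by (rule DERIV_nonpos_imp_le_at_0[OF \<psi>_deriv \<psi>_deriv_nonpos \<open>0 \<le> t\<close>])
  then show ?thesis
    by (simp add: \<psi>_def exp_minus field_simps)
qed

lemma relaxation_ode_solution:
  fixes q :: "real \<Rightarrow> real"
  assumes "\<And>t. 0 \<le> t \<Longrightarrow> (q has_real_derivative - \<gamma> * q t + \<gamma>) (at t within {0..})"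
    and "0 \<le> t"
  shows "q t = 1 + (q 0 - 1) * exp (- \<gamma> * t)"
proof -
  have "((\<lambda>s. exp (\<gamma> * s) * (q s - 1)) has_real_derivative 0) (at s within {0..})"
    if "s \<in> {0..}" for s
    using assms(1)[of s] that by (auto intro!: derivative_eq_intros simp: algebra_simps)
  then obtain C where "\<forall>s\<in>{0..}. exp (\<gamma> * s) * (q s - 1) = C"
    using has_field_derivative_zero_constant[of "{0::real..}"] by blast
  then have "exp (\<gamma> * t) * (q t - 1) = exp (\<gamma> * 0) * (q 0 - 1)"
    using assms(2) by (metis atLeast_iff order_refl)
  then show ?thesis
    by (simp add: exp_minus field_simps)
qed

lemma exp_decay_eventually_less:
  fixes \<gamma> e :: real
  assumes "0 < \<gamma>" "0 < e"
  shows "\<exists>s0. \<forall>s\<ge>s0. C * exp (- \<gamma> * s) < e"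
proof -
  have "((\<lambda>s. C * exp (- \<gamma> * s)) \<longlongrightarrow> 0) at_top"
    using assms(1)
    by (intro tendsto_mult_right_zero filterlim_compose[OF exp_at_bot]
        filterlim_tendsto_neg_mult_at_bot[OF tendsto_const _ filterlim_ident]) auto
  then have "\<forall>\<^sub>F s in at_top. C * exp (- \<gamma> * s) < e"
    using assms(2) by (rule order_tendstoD(2))
  then show ?thesis
    unfolding eventually_at_top_linorder .
qed

lemma has_integral_exp_series_term:
  fixes L t :: real
  assumes "0 \<le> t"
  shows "((\<lambda>s. L * (L * s) ^ n / fact n) has_integral (L * t) ^ Suc n / fact (Suc n)) {0..t}"
proof -
  have "((\<lambda>s. L * (L * s) ^ n / fact n) has_integral
          (L * t) ^ Suc n / fact (Suc n) - (L * 0) ^ Suc n / fact (Suc n)) {0..t}"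
  proof (rule fundamental_theorem_of_calculus[OF assms])
    fix s :: real
    show "((\<lambda>s. (L * s) ^ Suc n / fact (Suc n)) has_vector_derivative L * (L * s) ^ n / fact n)
            (at s within {0..t})"
      unfolding has_real_derivative_iff_has_vector_derivative[symmetric]
      by (rule derivative_eq_intros refl)+ (simp add: divide_simps del: fact_Suc of_nat_Suc, simp)
  qed
  then show ?thesis by simp
qed

section \<open>Picard iteration\<close>

context
  fixes f :: "real \<Rightarrow> 'a::banach \<Rightarrow> 'a" and L :: real
  assumes L_nonneg: "0 \<le> L"
    and lipschitz: "\<And>t u v. 0 \<le> t \<Longrightarrow> norm (f t u - f t v) \<le> L * norm (u - v)"
    and continuous_on_picard_integrand: "\<And>x. continuous_on {0..} x \<Longrightarrow> continuous_on {0..} (\<lambda>s. f s (x s))"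
begin

definition picard_step :: "'a \<Rightarrow> (real \<Rightarrow> 'a) \<Rightarrow> real \<Rightarrow> 'a" where
  "picard_step u0 x t = u0 + integral {0..t} (\<lambda>s. f s (x s))"

definition picard_iterates :: "'a \<Rightarrow> nat \<Rightarrow> real \<Rightarrow> 'a" where
  "picard_iterates u0 n = (picard_step u0 ^^ n) (\<lambda>_. u0)"

lemma integrable_on_picard_integrand:
  "continuous_on {0..} x \<Longrightarrow> (\<lambda>s. f s (x s)) integrable_on {0..t}"
  by (rule integrable_continuous_real) (auto intro: continuous_on_subset[OF continuous_on_picard_integrand])

lemma picard_step_has_vector_derivative:
  assumes "continuous_on {0..} x" "0 \<le> t"
  shows "(picard_step u0 x has_vector_derivative f t (x t)) (at t within {0..})"
  unfolding picard_step_def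
  using integral_has_vector_derivative_atLeast_0[OF continuous_on_picard_integrand[OF assms(1)] assms(2)]
  by (auto intro!: derivative_eq_intros)

lemma continuous_on_picard_step:
  assumes "continuous_on {0..} x"
  shows "continuous_on {0..} (picard_step u0 x)"
  unfolding continuous_on_eq_continuous_within
proof
  fix t :: real assume "t \<in> {0..}"
  then have "0 \<le> t" by simp
  then show "continuous (at t within {0..}) (picard_step u0 x)"
    by (rule has_vector_derivative_continuous[OF picard_step_has_vector_derivative[OF assms]])
qed

lemma picard_iterates_Suc:
  "picard_iterates u0 (Suc n) = picard_step u0 (picard_iterates u0 n)"
  by (simp add: picard_iterates_def)

lemma continuous_on_picard_iterates: "continuous_on {0..} (picard_iterates u0 n)"
proof (induction n)
  case 0
  then show ?case by (simp add: picard_iterates_def)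
next
  case (Suc n)
  then show ?case by (simp only: picard_iterates_Suc continuous_on_picard_step)
qed

lemma norm_picard_step_diff_le:
  assumes x: "continuous_on {0..} x" and y: "continuous_on {0..} y"
    and g: "g integrable_on {0..t}" and le: "\<And>s. s \<in> {0..t} \<Longrightarrow> norm (x s - y s) \<le> g s"
  shows "norm (picard_step u0 x t - picard_step u0 y t) \<le> integral {0..t} (\<lambda>s. L * g s)"
proof -
  have "picard_step u0 x t - picard_step u0 y t = integral {0..t} (\<lambda>s. f s (x s) - f s (y s))"
    unfolding picard_step_def by (simp add: integral_diff integrable_on_picard_integrand x y)
  also have "norm \<dots> \<le> integral {0..t} (\<lambda>s. L * g s)"
  proof (rule integral_norm_bound_integral)
    fix s assume s: "s \<in> {0..t}"
    then have "norm (f s (x s) - f s (y s)) \<le> L * norm (x s - y s)"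
      using lipschitz by auto
    also have "\<dots> \<le> L * g s"
      by (rule mult_left_mono[OF le[OF s] L_nonneg])
    finally show "norm (f s (x s) - f s (y s)) \<le> L * g s" .
  qed (use integrable_on_cmult_left[OF g, of L] in \<open>auto intro!: integrable_diff integrable_on_picard_integrand x y\<close>)
  finally show ?thesis .
qed

lemma norm_picard_iterates_diff_le:
  assumes M: "\<And>s. s \<in> {0..T} \<Longrightarrow> norm (picard_iterates u0 1 s - picard_iterates u0 0 s) \<le> M"
    and t: "t \<in> {0..T}"
  shows "norm (picard_iterates u0 (Suc n) t - picard_iterates u0 n t) \<le> M * (L * t) ^ n / fact n"
  using t
proof (induction n arbitrary: t)
  case 0
  then show ?case using M by simp
next
  case (Suc n)
  let ?X = "picard_iterates u0"
  have t: "0 \<le> t" using Suc.prems by simp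
  have "norm (picard_step u0 (?X (Suc n)) t - picard_step u0 (?X n) t)
          \<le> integral {0..t} (\<lambda>s. L * (M * (L * s) ^ n / fact n))"
    by (rule norm_picard_step_diff_le)
       (use Suc in \<open>auto intro!: continuous_on_picard_iterates integrable_continuous_real continuous_intros\<close>)
  also have "\<dots> = M * ((L * t) ^ Suc n / fact (Suc n))"
  proof (rule integral_unique)
    show "((\<lambda>s. L * (M * (L * s) ^ n / fact n)) has_integral M * ((L * t) ^ Suc n / fact (Suc n))) {0..t}"
      using has_integral_mult_right[OF has_integral_exp_series_term[OF t, of L n], of M]
      by (simp add: mult.left_commute)
  qed
  finally show ?case
    by (simp add: picard_iterates_Suc)
qed

lemma picard_iterates_converge:
  "\<exists>Y. \<forall>T. uniform_limit {0..T} (picard_iterates u0) Y sequentially"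
proof -
  let ?X = "picard_iterates u0"
  let ?Y = "\<lambda>t. u0 + (\<Sum>i. ?X (Suc i) t - ?X i t)"
  have "uniform_limit {0..T} ?X ?Y sequentially" for T
  proof -
    obtain M where M: "\<And>s. s \<in> {0..T} \<Longrightarrow> norm (?X 1 s - ?X 0 s) \<le> M"
      using compact_imp_bounded[OF compact_continuous_image[of "{0..T}" "\<lambda>s. ?X 1 s - ?X 0 s"]]
      by (force simp: bounded_iff intro: continuous_intros continuous_on_subset[OF continuous_on_picard_iterates])
    have "uniform_limit {0..T} (\<lambda>n t. \<Sum>i<n. ?X (Suc i) t - ?X i t) (\<lambda>t. \<Sum>i. ?X (Suc i) t - ?X i t) sequentially"
    proof (rule Weierstrass_m_test)
      show "summable (\<lambda>n. \<bar>M\<bar> * (L * \<bar>T\<bar>) ^ n / fact n)"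
        using summable_mult[OF summable_exp[of "L * \<bar>T\<bar>"], of "\<bar>M\<bar>"] by (simp add: field_simps)
      fix n t assume t: "t \<in> {0..T}"
      have "norm (?X (Suc n) t - ?X n t) \<le> M * (L * t) ^ n / fact n"
        by (rule norm_picard_iterates_diff_le[OF M t])
      also have "\<dots> \<le> \<bar>M\<bar> * (L * \<bar>T\<bar>) ^ n / fact n"
        using t L_nonneg
        by (auto intro!: divide_right_mono mult_mono power_mono mult_left_mono)
      finally show "norm (?X (Suc n) t - ?X n t) \<le> \<bar>M\<bar> * (L * \<bar>T\<bar>) ^ n / fact n" .
    qed
    then have "uniform_limit {0..T} (\<lambda>n t. u0 + (\<Sum>i<n. ?X (Suc i) t - ?X i t)) ?Y sequentially"
      by (intro uniform_limit_intros)
    moreover have "u0 + (\<Sum>i<n. ?X (Suc i) t - ?X i t) = ?X n t" for n t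
      by (simp only: sum_lessThan_telescope[of "\<lambda>i. ?X i t"]) (simp add: picard_iterates_def)
    ultimately show ?thesis by simp
  qed
  then show ?thesis by blast
qed

lemma uniform_limit_picard_integrand:
  assumes "uniform_limit S X Y F" "S \<subseteq> {0..}"
  shows "uniform_limit S (\<lambda>n s. f s (X n s)) (\<lambda>s. f s (Y s)) F"
  unfolding uniform_limit_iff
proof (intro allI impI)
  fix e :: real assume "0 < e"
  then have "\<forall>\<^sub>F n in F. \<forall>s\<in>S. dist (X n s) (Y s) < e / (L + 1)"
    using assms(1) L_nonneg by (simp add: uniform_limit_iff)
  then show "\<forall>\<^sub>F n in F. \<forall>s\<in>S. dist (f s (X n s)) (f s (Y s)) < e"
  proof (rule eventually_mono, intro ballI)
    fix n s assume s: "s \<in> S" and close: "\<forall>s\<in>S. dist (X n s) (Y s) < e / (L + 1)"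
    have "dist (f s (X n s)) (f s (Y s)) \<le> L * dist (X n s) (Y s)"
      using lipschitz[of s] s assms(2) by (auto simp: dist_norm)
    also have "\<dots> \<le> L * (e / (L + 1))"
      using close s L_nonneg by (intro mult_left_mono) auto
    also have "\<dots> < e"
      using \<open>0 < e\<close> L_nonneg by (simp add: field_simps)
    finally show "dist (f s (X n s)) (f s (Y s)) < e" .
  qed
qed

lemma picard_existence:
  "\<exists>x. x 0 = u0 \<and> (\<forall>t\<ge>0. (x has_vector_derivative f t (x t)) (at t within {0..}))"
proof -
  let ?X = "picard_iterates u0"
  obtain Y where Y: "\<And>T. uniform_limit {0..T} ?X Y sequentially"
    using picard_iterates_converge by blast
  have Y_cont: "continuous_on {0..} Y"
    by (intro continuous_on_atLeast_0I uniform_limit_theorem[OF _ Y]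
        always_eventually allI continuous_on_subset[OF continuous_on_picard_iterates]) auto
  have fixed_point: "picard_step u0 Y t = Y t" if t: "0 \<le> t" for t
  proof -
    obtain I J where I: "\<And>n. ((\<lambda>s. f s (?X n s)) has_integral I n) {0..t}"
      and J: "((\<lambda>s. f s (Y s)) has_integral J) {0..t}" and "I \<longlonglongrightarrow> J"
      by (rule uniform_limit_integral[OF uniform_limit_picard_integrand[OF Y]])
         (auto intro: continuous_on_subset[OF continuous_on_picard_integrand] continuous_on_picard_iterates)
    then have "(\<lambda>n. u0 + integral {0..t} (\<lambda>s. f s (?X n s))) \<longlonglongrightarrow> picard_step u0 Y t"
      using integral_unique[OF I] integral_unique[OF J] by (simp add: picard_step_def tendsto_add)
    then have "(\<lambda>n. ?X (Suc n) t) \<longlonglongrightarrow> picard_step u0 Y t"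
      by (simp add: picard_iterates_Suc picard_step_def)
    moreover have "(\<lambda>n. ?X (Suc n) t) \<longlonglongrightarrow> Y t"
      using tendsto_uniform_limitI[OF Y, of t t] t by (auto intro: LIMSEQ_Suc)
    ultimately show ?thesis
      by (rule LIMSEQ_unique)
  qed
  show ?thesis
  proof (intro exI conjI allI impI)
    show "picard_step u0 Y 0 = u0"
      by (simp add: picard_step_def)
    fix t :: real assume "0 \<le> t"
    then show "(picard_step u0 Y has_vector_derivative f t (picard_step u0 Y t)) (at t within {0..})"
      using picard_step_has_vector_derivative[OF Y_cont] fixed_point by simp
  qed
qed

end

lemma lipschitz_forced_solution_exists:
  fixes A G :: "'a::banach \<Rightarrow> 'a"
  assumes A_lin: "bounded_linear A" and G_lip: "L-lipschitz_on UNIV G"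
    and q_cont: "continuous_on {0..} q" and q_bound: "\<And>t. 0 \<le> t \<Longrightarrow> \<bar>q t\<bar> \<le> Q"
  shows "\<exists>u. u 0 = u0 \<and> (\<forall>t\<ge>0. (u has_vector_derivative F - A (u t) - q t *\<^sub>R G (u t)) (at t within {0..}))"
proof -
  obtain KA where KA: "\<And>x. norm (A x) \<le> norm x * KA" and "0 < KA"
    using bounded_linear.pos_bounded[OF A_lin] by blast
  have "0 \<le> L" "0 \<le> Q"
    using lipschitz_on_nonneg[OF G_lip] q_bound[of 0] by auto
  define f where "f t v = F - A v - q t *\<^sub>R G v" for t v
  have "norm (f t v - f t w) \<le> (KA + Q * L) * norm (v - w)" if "0 \<le> t" for t v w
  proof -
    have "f t v - f t w = - A (v - w) - q t *\<^sub>R (G v - G w)"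
      by (simp add: f_def linear_diff[OF bounded_linear.linear[OF A_lin]] algebra_simps)
    also have "norm \<dots> \<le> norm (v - w) * KA + Q * (L * norm (v - w))"
      using KA[of "v - w"] q_bound[OF that] lipschitz_onD[OF G_lip, of v w] \<open>0 \<le> Q\<close>
      by (auto simp: dist_norm intro!: order_trans[OF norm_triangle_ineq4] add_mono mult_mono)
    finally show ?thesis by (simp add: algebra_simps)
  qed
  moreover have "continuous_on {0..} (\<lambda>s. f s (x s))" if "continuous_on {0..} x" for x
    unfolding f_def
    by (intro continuous_intros that q_cont continuous_on_compose2[OF lipschitz_on_continuous_on[OF G_lip] that]
        bounded_linear.continuous_on[OF A_lin]) auto
  ultimately show ?thesis
    using picard_existence[of "KA + Q * L" f u0] \<open>0 < KA\<close> \<open>0 \<le> Q\<close> \<open>0 \<le> L\<close>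
    by (fastforce simp: f_def)
qed

section \<open>Coercivity, Lipschitz bounds and the radial retraction\<close>

lemma positive_definite_imp_coercive:
  fixes A :: "'a::euclidean_space \<Rightarrow> 'a"
  assumes lin: "linear A" and pos: "\<forall>u. u \<noteq> 0 \<longrightarrow> inner (A u) u > 0"
  shows "\<exists>c>0. \<forall>u. c * (norm u)\<^sup>2 \<le> inner (A u) u"
proof -
  obtain b :: 'a where "b \<in> Basis" using nonempty_Basis by blast
  then have "sphere (0::'a) 1 \<noteq> {}" by (auto intro!: exI[of _ b])
  moreover have "continuous_on (sphere 0 1) (\<lambda>u. inner (A u) u)"
    using lin by (intro continuous_intros linear_continuous_on) (simp add: linear_conv_bounded_linear)
  ultimately obtain u0 where u0: "u0 \<in> sphere 0 1"
    and min: "\<And>v. v \<in> sphere 0 1 \<Longrightarrow> inner (A u0) u0 \<le> inner (A v) v"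
    using continuous_attains_inf[OF compact_sphere] by blast
  show ?thesis
  proof (intro exI conjI allI)
    show "0 < inner (A u0) u0" using pos u0 by (metis mem_sphere_0 norm_zero zero_neq_one)
    fix u :: 'a
    show "inner (A u0) u0 * (norm u)\<^sup>2 \<le> inner (A u) u"
    proof (cases "u = 0")
      case True
      then show ?thesis using linear_0[OF lin] by simp
    next
      case False
      define v where "v = u /\<^sub>R norm u"
      have "inner (A u) u = inner (A (norm u *\<^sub>R v)) (norm u *\<^sub>R v)"
        using False by (simp add: v_def)
      also have "\<dots> = (norm u)\<^sup>2 * inner (A v) v"
        by (simp add: linear_scale[OF lin] power2_eq_square)
      finally have "inner (A u) u = (norm u)\<^sup>2 * inner (A v) v" .
      moreover have "inner (A u0) u0 \<le> inner (A v) v"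
        using False by (intro min) (simp add: v_def)
      ultimately show ?thesis by (simp add: mult.commute mult_right_mono)
    qed
  qed
qed

lemma locally_lipschitz_imp_lipschitz_on_compact:
  assumes loclip: "\<forall>x. \<exists>r>0. \<exists>L. L-lipschitz_on (cball x r) N" and "compact S"
  shows "\<exists>L. L-lipschitz_on S N"
proof -
  have "local_lipschitz {0::real} S (\<lambda>_. N)"
  proof (rule local_lipschitzI)
    fix t x assume "x \<in> S"
    obtain r L where "r > 0" "L-lipschitz_on (cball x r) N" using loclip by blast
    then show "\<exists>u>0. \<exists>L. \<forall>t\<in>cball t u \<inter> {0}. L-lipschitz_on (cball x u \<inter> S) N"
      by (auto intro: lipschitz_on_subset)
  qed
  then obtain L where "L-lipschitz_on S N"
    using local_lipschitz_compact_implies_lipschitz[OF _ \<open>compact S\<close>, of "{0}"] by auto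
  then show ?thesis ..
qed

lemma lipschitz_on_cball_norm_le:
  assumes lip: "L-lipschitz_on (cball 0 R) N" and v: "norm v \<le> R"
  shows "norm (N v) \<le> norm (N 0) + L * R"
proof -
  have "norm (N v - N 0) \<le> L * norm (v - 0)"
    using lipschitz_onD[OF lip, of v 0] v by (simp add: dist_norm order_trans[OF norm_ge_zero v])
  also have "\<dots> \<le> L * R"
    using v lipschitz_on_nonneg[OF lip] by (simp add: mult_left_mono)
  finally show ?thesis
    using norm_triangle_ineq2[of "N v" "N 0"] by linarith
qed

lemma closest_point_cball_0:
  fixes u :: "'a::euclidean_space"
  assumes R: "0 < R" and u: "R < norm u"
  shows "closest_point (cball 0 R) u = (R / norm u) *\<^sub>R u"
proof (rule closest_point_unique[symmetric])
  show "(R / norm u) *\<^sub>R u \<in> cball 0 R"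
    using R u by simp
  have "u \<noteq> 0"
    using R u by (metis norm_zero not_less_iff_gr_or_eq)
  have "dist u ((R / norm u) *\<^sub>R u) = norm ((1 - R / norm u) *\<^sub>R u)"
    by (simp add: dist_norm algebra_simps)
  also have "\<dots> = (1 - R / norm u) * norm u"
    using R u \<open>u \<noteq> 0\<close> by (simp add: divide_le_eq_1)
  also have "\<dots> = norm u - R"
    using \<open>u \<noteq> 0\<close> by (simp add: field_simps)
  finally have "dist u ((R / norm u) *\<^sub>R u) = norm u - R" .
  then show "\<forall>z\<in>cball 0 R. dist u ((R / norm u) *\<^sub>R u) \<le> dist u z"
    by (auto simp: dist_norm intro: order_trans[OF _ norm_triangle_ineq2])
qed auto

lemma inner_closest_point_cball_0_eq_0:
  fixes N :: "'a::euclidean_space \<Rightarrow> 'a"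
  assumes orth: "\<forall>u. inner (N u) u = 0" and R: "0 < R"
  shows "inner (N (closest_point (cball 0 R) u)) u = 0"
proof (cases "norm u \<le> R")
  case True
  then show ?thesis using orth by (simp add: closest_point_self)
next
  case False
  then have "0 < R / norm u" using R by (intro divide_pos_pos) auto
  moreover have "inner (N ((R / norm u) *\<^sub>R u)) ((R / norm u) *\<^sub>R u) = 0"
    using orth by blast
  ultimately show ?thesis
    using closest_point_cball_0[OF R, of u] False R by auto
qed

lemma lipschitz_on_comp_closest_point:
  assumes lip: "L-lipschitz_on S N" and S: "convex S" "closed S" "S \<noteq> {}"
  shows "L-lipschitz_on UNIV (\<lambda>v. N (closest_point S v))"
proof (rule lipschitz_onI)
  fix u v
  have "dist (N (closest_point S u)) (N (closest_point S v)) \<le> L * dist (closest_point S u) (closest_point S v)"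
    by (rule lipschitz_onD[OF lip closest_point_in_set closest_point_in_set]) (use S in auto)
  also have "\<dots> \<le> L * dist u v"
    by (rule mult_left_mono[OF closest_point_lipschitz[OF S] lipschitz_on_nonneg[OF lip]])
  finally show "dist (N (closest_point S u)) (N (closest_point S v)) \<le> L * dist u v" .
qed (rule lipschitz_on_nonneg[OF lip])

section \<open>Energy estimates\<close>

lemma inner_coercive_forcing_le:
  fixes A :: "'a::real_inner \<Rightarrow> 'a"
  assumes coercive: "c * (norm u)\<^sup>2 \<le> inner (A u) u" and c: "0 < c"
  shows "2 * inner u (F - A u) \<le> - c * ((norm u)\<^sup>2 - (norm F / c)\<^sup>2)"
proof -
  have "2 * inner u (F - A u) \<le> 2 * (norm u * norm F) - 2 * (c * (norm u)\<^sup>2)"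
    using abs_le_D1[OF Cauchy_Schwarz_ineq2[of u F]] coercive
    by (simp add: inner_diff_right inner_commute)
  also have "\<dots> \<le> - c * ((norm u)\<^sup>2 - (norm F / c)\<^sup>2)"
  proof -
    have "0 \<le> (c * norm u - norm F)\<^sup>2 / c" using c by simp
    then have "2 * (norm u * norm F) \<le> c * (norm u)\<^sup>2 + (norm F)\<^sup>2 / c"
      using c by (simp add: power2_eq_square field_simps)
    moreover have "c * (norm F / c)\<^sup>2 = (norm F)\<^sup>2 / c"
      using c by (simp add: power2_eq_square)
    moreover have "- c * ((norm u)\<^sup>2 - (norm F / c)\<^sup>2) = c * (norm F / c)\<^sup>2 - c * (norm u)\<^sup>2"
      by (simp add: algebra_simps)
    ultimately show ?thesis by linarith
  qed
  finally show ?thesis .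
qed

lemma energy_bound:
  fixes A :: "'a::real_inner \<Rightarrow> 'a"
  assumes coercive: "\<forall>u. c * (norm u)\<^sup>2 \<le> inner (A u) u" and c: "0 < c"
    and deriv: "\<And>t. 0 \<le> t \<Longrightarrow> (u has_vector_derivative F - A (u t) - G t (u t)) (at t within {0..})"
    and orth: "\<And>t v. inner (G t v) v = 0" and t: "0 \<le> t"
  shows "norm (u t) \<le> max (norm (u 0)) (norm F / c)"
proof -
  define K where "K = (norm F / c)\<^sup>2"
  define \<phi> where "\<phi> s = (norm (u s))\<^sup>2 - K" for s
  have "(\<phi> has_real_derivative 2 * inner (u s) (F - A (u s))) (at s within {0..})" if "0 \<le> s" for s
    unfolding \<phi>_def power2_norm_eq_inner
    using has_real_derivative_inner_self[OF deriv[OF that]] orth[of s "u s"]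
    by (auto intro!: derivative_eq_intros simp: inner_diff_right inner_commute)
  moreover have "2 * inner (u s) (F - A (u s)) \<le> - c * \<phi> s" for s
    unfolding \<phi>_def K_def using coercive c by (intro inner_coercive_forcing_le) auto
  ultimately have "\<phi> t \<le> exp (- c * t) * \<phi> 0"
    by (intro gronwall_linear t)
  also have "\<dots> \<le> max 0 (\<phi> 0)"
  proof -
    have "exp (- c * t) \<le> 1" using c t by simp
    then show ?thesis
      by (cases "0 \<le> \<phi> 0") (auto simp: mult_left_le_one_le mult_nonneg_nonpos max_def)
  qed
  also have "\<dots> = max ((norm (u 0))\<^sup>2) K - K"
    by (auto simp: \<phi>_def max_def)
  finally have "(norm (u t))\<^sup>2 \<le> max ((norm (u 0))\<^sup>2) K"
    by (simp add: \<phi>_def)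
  also have "\<dots> = (max (norm (u 0)) (norm F / c))\<^sup>2"
    using c by (auto simp: K_def max_def power_mono)
  finally show ?thesis
    by (rule power2_le_imp_le) (simp add: le_max_iff_disj)
qed

lemma inner_perturbation_le:
  fixes w a d n :: "'a::real_inner"
  assumes "0 \<le> inner a w" and "norm d \<le> L * norm w" and "0 \<le> L"
    and "\<bar>q\<bar> \<le> Q" and "\<bar>p\<bar> \<le> \<delta>" and "norm n \<le> M"
  shows "2 * inner w (- a - q *\<^sub>R d - p *\<^sub>R n) \<le> (2 * Q * L + 1) * (norm w)\<^sup>2 + (\<delta> * M)\<^sup>2"
proof -
  have "\<bar>inner w (q *\<^sub>R d)\<bar> \<le> norm w * (Q * (L * norm w))"
    using assms(2-4) by (auto intro!: order_trans[OF Cauchy_Schwarz_ineq2] mult_left_mono mult_mono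
        simp del: inner_scaleR_right)
  moreover have "\<bar>inner w (p *\<^sub>R n)\<bar> \<le> norm w * (\<delta> * M)"
    using assms(5,6) by (auto intro!: order_trans[OF Cauchy_Schwarz_ineq2] mult_left_mono mult_mono
        simp del: inner_scaleR_right)
  ultimately have "inner w (- a - q *\<^sub>R d - p *\<^sub>R n) \<le> Q * L * (norm w)\<^sup>2 + norm w * (\<delta> * M)"
    using assms(1) by (simp add: inner_diff_right inner_commute power2_eq_square algebra_simps abs_le_iff)
  moreover have "2 * (norm w * (\<delta> * M)) \<le> (norm w)\<^sup>2 + (\<delta> * M)\<^sup>2"
    using sum_squares_bound[of "norm w" "\<delta> * M"] by (simp add: power2_eq_square algebra_simps)
  ultimately show ?thesis
    by (simp add: algebra_simps)
qed

lemma norm_solution_diff_le: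
  fixes A N :: "'a::real_inner \<Rightarrow> 'a"
  assumes lin: "linear A" and A_nonneg: "\<forall>w. 0 \<le> inner (A w) w"
    and d1: "\<And>t. 0 \<le> t \<Longrightarrow> (u1 has_vector_derivative F - A (u1 t) - q1 t *\<^sub>R N (u1 t)) (at t within {0..})"
    and d2: "\<And>t. 0 \<le> t \<Longrightarrow> (u2 has_vector_derivative F - A (u2 t) - q2 t *\<^sub>R N (u2 t)) (at t within {0..})"
    and bound1: "\<And>t. 0 \<le> t \<Longrightarrow> norm (u1 t) \<le> R" and bound2: "\<And>t. 0 \<le> t \<Longrightarrow> norm (u2 t) \<le> R"
    and lip: "L-lipschitz_on (cball 0 R) N" and N_bound: "\<And>v. norm v \<le> R \<Longrightarrow> norm (N v) \<le> M"
    and q2_bound: "\<And>t. 0 \<le> t \<Longrightarrow> \<bar>q2 t\<bar> \<le> Q"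
    and q_close: "\<And>t. 0 \<le> t \<Longrightarrow> \<bar>q1 t - q2 t\<bar> \<le> \<delta>"
    and t: "0 \<le> t"
  shows "(norm (u1 t - u2 t))\<^sup>2 \<le> exp ((2 * Q * L + 1) * t) * ((norm (u1 0 - u2 0))\<^sup>2 + (\<delta> * M)\<^sup>2)"
proof -
  define K where "K = 2 * Q * L + 1"
  define w where "w = (\<lambda>s. u1 s - u2 s)"
  define w' where "w' s = - A (w s) - q2 s *\<^sub>R (N (u1 s) - N (u2 s)) - (q1 s - q2 s) *\<^sub>R N (u1 s)" for s
  define \<phi> where "\<phi> s = (norm (w s))\<^sup>2 + (\<delta> * M)\<^sup>2" for s
  have "0 \<le> L" "0 \<le> Q"
    using lipschitz_on_nonneg[OF lip] q2_bound[of 0] by auto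
  then have "1 \<le> K" by (simp add: K_def)
  have w_deriv: "(w has_vector_derivative w' s) (at s within {0..})" if "0 \<le> s" for s
    using has_vector_derivative_diff[OF d1[OF that] d2[OF that]]
    by (simp add: w_def w'_def linear_diff[OF lin] algebra_simps)
  have "(\<phi> has_real_derivative 2 * inner (w s) (w' s)) (at s within {0..})" if "0 \<le> s" for s
    unfolding \<phi>_def power2_norm_eq_inner
    using has_real_derivative_inner_self[OF w_deriv[OF that]] by (auto intro!: derivative_eq_intros)
  moreover have "2 * inner (w s) (w' s) \<le> K * \<phi> s" if s: "0 \<le> s" for s
  proof -
    have "2 * inner (w s) (w' s) \<le> K * (norm (w s))\<^sup>2 + (\<delta> * M)\<^sup>2"
      unfolding w'_def K_def
    proof (rule inner_perturbation_le)
      show "norm (N (u1 s) - N (u2 s)) \<le> L * norm (w s)"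
        using lipschitz_onD[OF lip] bound1[OF s] bound2[OF s] by (simp add: w_def dist_norm)
    qed (use A_nonneg \<open>0 \<le> L\<close> q2_bound q_close N_bound bound1 s in \<open>auto simp: inner_commute\<close>)
    also have "\<dots> \<le> K * \<phi> s"
      using mult_right_mono[OF \<open>1 \<le> K\<close> zero_le_power2[of "\<delta> * M"]] by (simp add: \<phi>_def distrib_left)
    finally show ?thesis .
  qed
  ultimately have "\<phi> t \<le> exp (K * t) * \<phi> 0"
    by (intro gronwall_linear t)
  moreover have "0 \<le> (\<delta> * M)\<^sup>2" by simp
  ultimately show ?thesis
    unfolding \<phi>_def w_def K_def by linarith
qed

section \<open>The augmented system\<close>

lemma semiflow_eq_solution:
  assumes wp: "well_posed f" and x: "fwd_solution f u0 x" and "0 \<le> t"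
  shows "semiflow f t u0 = x t"
  unfolding semiflow_def
proof (rule the_equality)
  show "\<exists>y. fwd_solution f u0 y \<and> y t = x t" using x by blast
next
  fix v assume "\<exists>y. fwd_solution f u0 y \<and> y t = v"
  moreover obtain X where "\<forall>y. fwd_solution f u0 y \<longrightarrow> (\<forall>t\<ge>0. y t = X t)"
    using wp unfolding well_posed_def by blast
  ultimately show "v = x t" using x \<open>0 \<le> t\<close> by metis
qed

lemma infdist_Pair_Times_singleton:
  fixes v :: "'a::metric_space" and b :: "'b::metric_space"
  shows "infdist (v, b) (S \<times> {b}) = infdist v S"
proof -
  have "S \<times> {b} = (\<lambda>a. (a, b)) ` S" by auto
  then show ?thesis
    by (simp add: infdist_def image_image dist_Pair_Pair)
qed

lemma dist_Pair_le_add: "dist (a, b) (c, d) \<le> dist a c + dist b d"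
  unfolding dist_Pair_Pair by (rule order_trans[OF sqrt_sum_squares_le_sum_abs]) simp

definition q_trajectory :: "real \<Rightarrow> real \<Rightarrow> real \<Rightarrow> real" where
  "q_trajectory \<gamma> q0 t = 1 + (q0 - 1) * exp (- \<gamma> * t)"

lemma abs_q_trajectory_minus_1: "\<bar>q_trajectory \<gamma> q0 t - 1\<bar> = \<bar>q0 - 1\<bar> * exp (- \<gamma> * t)"
  by (simp add: q_trajectory_def abs_mult)

lemma abs_q_trajectory_le:
  assumes "0 \<le> \<gamma>" "0 \<le> t"
  shows "\<bar>q_trajectory \<gamma> q0 t\<bar> \<le> 1 + \<bar>q0 - 1\<bar>"
proof -
  have "\<bar>q_trajectory \<gamma> q0 t - 1\<bar> \<le> \<bar>q0 - 1\<bar>"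
    using assms by (simp add: abs_q_trajectory_minus_1 mult_left_le)
  then show ?thesis by linarith
qed

context
  fixes A N :: "'a::euclidean_space \<Rightarrow> 'a" and F :: 'a and \<gamma> c :: real
  assumes A_lin: "bounded_linear A"
    and coercive: "\<forall>u. c * (norm u)\<^sup>2 \<le> inner (A u) u" and c_pos: "0 < c"
    and N_loclip: "\<forall>x. \<exists>r>0. \<exists>L. L-lipschitz_on (cball x r) N"
    and N_orth: "\<forall>u. inner (N u) u = 0"
    and gamma_pos: "0 < \<gamma>"
begin

lemma inner_A_self_nonneg: "0 \<le> inner (A w) w"
  using coercive c_pos by (meson order_trans zero_le_mult_iff zero_le_power2 less_imp_le)

lemma forced_solution_bound:
  assumes "\<And>t. 0 \<le> t \<Longrightarrow> (u has_vector_derivative F - A (u t) - q t *\<^sub>R N (u t)) (at t within {0..})"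
    and "0 \<le> t"
  shows "norm (u t) \<le> max (norm (u 0)) (norm F / c)"
  by (rule energy_bound[where G="\<lambda>t v. q t *\<^sub>R N v", OF coercive c_pos assms(1)])
     (use N_orth assms(2) in auto)

lemma forced_solution_exists:
  assumes q_cont: "continuous_on {0..} q" and q_bound: "\<And>t. 0 \<le> t \<Longrightarrow> \<bar>q t\<bar> \<le> Q"
  shows "\<exists>u. u 0 = u0 \<and> (\<forall>t\<ge>0. (u has_vector_derivative F - A (u t) - q t *\<^sub>R N (u t)) (at t within {0..}))"
proof -
  define R where "R = max (norm u0) (norm F / c) + 1"
  have "0 < R"
    unfolding R_def by (simp add: add_nonneg_pos le_max_iff_disj)
  define r where "r = closest_point (cball (0::'a) R)"
  obtain L where "L-lipschitz_on (cball 0 R) N"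
    using locally_lipschitz_imp_lipschitz_on_compact[OF N_loclip compact_cball] by blast
  then have "L-lipschitz_on UNIV (\<lambda>v. N (r v))"
    unfolding r_def by (rule lipschitz_on_comp_closest_point) (use \<open>0 < R\<close> in auto)
  then obtain u where "u 0 = u0" and u_deriv: "\<And>t. 0 \<le> t \<Longrightarrow>
      (u has_vector_derivative F - A (u t) - q t *\<^sub>R N (r (u t))) (at t within {0..})"
    using lipschitz_forced_solution_exists[OF A_lin _ q_cont q_bound] by blast
  \<comment> \<open>The radial retraction \<open>r\<close> keeps \<open>N (r v)\<close> orthogonal to \<open>v\<close>, so the energy bound
    also holds for the truncated equation and shows that the truncation is never active.\<close>
  have "norm (u t) \<le> max (norm (u 0)) (norm F / c)" if "0 \<le> t" for t
    using energy_bound[where G="\<lambda>t v. q t *\<^sub>R N (r v)", OF coercive c_pos u_deriv _ that]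
      inner_closest_point_cball_0_eq_0[OF N_orth \<open>0 < R\<close>] by (simp add: r_def)
  then have "r (u t) = u t" if "0 \<le> t" for t
    unfolding r_def using that \<open>u 0 = u0\<close> by (intro closest_point_self) (force simp: R_def)
  then show ?thesis
    using \<open>u 0 = u0\<close> u_deriv by auto
qed

lemma forced_solution_unique:
  assumes d1: "\<And>t. 0 \<le> t \<Longrightarrow> (u1 has_vector_derivative F - A (u1 t) - q t *\<^sub>R N (u1 t)) (at t within {0..})"
    and d2: "\<And>t. 0 \<le> t \<Longrightarrow> (u2 has_vector_derivative F - A (u2 t) - q t *\<^sub>R N (u2 t)) (at t within {0..})"
    and q_bound: "\<And>t. 0 \<le> t \<Longrightarrow> \<bar>q t\<bar> \<le> Q" and "u1 0 = u2 0" and "0 \<le> t"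
  shows "u1 t = u2 t"
proof -
  define R where "R = max (norm (u1 0)) (norm F / c)"
  obtain L where lip: "L-lipschitz_on (cball 0 R) N"
    using locally_lipschitz_imp_lipschitz_on_compact[OF N_loclip compact_cball] by blast
  define M where "M = norm (N 0) + L * R"
  have "(norm (u1 t - u2 t))\<^sup>2 \<le> exp ((2 * Q * L + 1) * t) * ((norm (u1 0 - u2 0))\<^sup>2 + (0 * M)\<^sup>2)"
  proof (rule norm_solution_diff_le[OF bounded_linear.linear[OF A_lin] _ d1 d2 _ _ lip])
    show "norm (u1 s) \<le> R" "norm (u2 s) \<le> R" if "0 \<le> s" for s
      using forced_solution_bound[OF d1 that] forced_solution_bound[OF d2 that] \<open>u1 0 = u2 0\<close>
      by (simp_all add: R_def)
  qed (use inner_A_self_nonneg lipschitz_on_cball_norm_le[OF lip] q_bound \<open>0 \<le> t\<close> in \<open>auto simp: M_def\<close>)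
  then show ?thesis
    using \<open>u1 0 = u2 0\<close> by simp
qed

lemma augmented_solution_components:
  assumes z: "fwd_solution (augmented_field A N F \<gamma>) (u0, q0) z" and t: "0 \<le> t"
  shows "snd (z t) = q_trajectory \<gamma> q0 t"
    and "((\<lambda>t. fst (z t)) has_vector_derivative
           F - A (fst (z t)) - q_trajectory \<gamma> q0 t *\<^sub>R N (fst (z t))) (at t within {0..})"
proof -
  have z_deriv: "(z has_vector_derivative augmented_field A N F \<gamma> (z s)) (at s within {0..})"
    if "0 \<le> s" for s
    using z that by (simp add: fwd_solution_def)
  have field: "augmented_field A N F \<gamma> (z s)
      = (F - A (fst (z s)) - snd (z s) *\<^sub>R N (fst (z s)), - \<gamma> * snd (z s) + \<gamma>)" for s
    using N_orth by (simp add: augmented_field_def split: prod.splits)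
  have q: "snd (z s) = q_trajectory \<gamma> q0 s" if "0 \<le> s" for s
  proof -
    have "((\<lambda>s. snd (z s)) has_real_derivative - \<gamma> * snd (z s) + \<gamma>) (at s within {0..})"
      if "0 \<le> s" for s
      using bounded_linear.has_vector_derivative[OF bounded_linear_snd z_deriv[OF that]] field[of s]
      by (simp add: has_real_derivative_iff_has_vector_derivative)
    then show ?thesis
      using relaxation_ode_solution[of "\<lambda>s. snd (z s)" \<gamma> s] z that
      by (simp add: q_trajectory_def fwd_solution_def)
  qed
  show "snd (z t) = q_trajectory \<gamma> q0 t"
    by (rule q[OF t])
  show "((\<lambda>t. fst (z t)) has_vector_derivative
           F - A (fst (z t)) - q_trajectory \<gamma> q0 t *\<^sub>R N (fst (z t))) (at t within {0..})"
    using bounded_linear.has_vector_derivative[OF bounded_linear_fst z_deriv[OF t]] field[of t] q[OF t]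
    by simp
qed

lemma augmented_solution_exists: "\<exists>z. fwd_solution (augmented_field A N F \<gamma>) (u0, q0) z"
proof -
  have "continuous_on {0..} (q_trajectory \<gamma> q0)"
    unfolding q_trajectory_def by (intro continuous_intros)
  then obtain u where "u 0 = u0" and u_deriv: "\<And>t. 0 \<le> t \<Longrightarrow>
      (u has_vector_derivative F - A (u t) - q_trajectory \<gamma> q0 t *\<^sub>R N (u t)) (at t within {0..})"
    using forced_solution_exists[of "q_trajectory \<gamma> q0" "1 + \<bar>q0 - 1\<bar>" u0]
      abs_q_trajectory_le gamma_pos by fastforce
  have "fwd_solution (augmented_field A N F \<gamma>) (u0, q0) (\<lambda>t. (u t, q_trajectory \<gamma> q0 t))"
    unfolding fwd_solution_def
  proof (intro conjI allI impI)
    show "(u 0, q_trajectory \<gamma> q0 0) = (u0, q0)"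
      by (simp add: \<open>u 0 = u0\<close> q_trajectory_def)
    fix t :: real assume "0 \<le> t"
    have "(q_trajectory \<gamma> q0 has_vector_derivative - \<gamma> * q_trajectory \<gamma> q0 t + \<gamma>) (at t within {0..})"
      unfolding q_trajectory_def has_real_derivative_iff_has_vector_derivative[symmetric]
      by (auto intro!: derivative_eq_intros simp: algebra_simps)
    then show "((\<lambda>t. (u t, q_trajectory \<gamma> q0 t)) has_vector_derivative
        augmented_field A N F \<gamma> (u t, q_trajectory \<gamma> q0 t)) (at t within {0..})"
      using has_vector_derivative_Pair[OF u_deriv[OF \<open>0 \<le> t\<close>]] N_orth
      by (simp add: augmented_field_def)
  qed
  then show ?thesis by blast
qed

lemma augmented_well_posed: "well_posed (augmented_field A N F \<gamma>)"
  unfolding well_posed_def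
proof
  fix z0 :: "'a \<times> real"
  obtain u0 q0 where z0: "z0 = (u0, q0)" by fastforce
  obtain z where z: "fwd_solution (augmented_field A N F \<gamma>) z0 z"
    using augmented_solution_exists unfolding z0 by blast
  have "y t = z t" if y: "fwd_solution (augmented_field A N F \<gamma>) z0 y" and "0 \<le> t" for y t
  proof -
    have "fst (y t) = fst (z t)"
      by (rule forced_solution_unique[OF augmented_solution_components(2)
            augmented_solution_components(2) abs_q_trajectory_le])
         (use y z gamma_pos \<open>0 \<le> t\<close> in \<open>auto simp: z0 fwd_solution_def\<close>)
    moreover have "snd (y t) = snd (z t)"
      using augmented_solution_components(1) y z \<open>0 \<le> t\<close> unfolding z0 by metis
    ultimately show ?thesis by (simp add: prod_eq_iff)
  qed
  with z show "\<exists>x. fwd_solution (augmented_field A N F \<gamma>) z0 x \<and>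
      (\<forall>y. fwd_solution (augmented_field A N F \<gamma>) z0 y \<longrightarrow> (\<forall>t\<ge>0. y t = x t))"
    by blast
qed

lemma augmented_semiflow_on_line:
  assumes wp: "well_posed (original_field A N F)" and t: "0 \<le> t"
  shows "semiflow (augmented_field A N F \<gamma>) t (a, 1) = (semiflow (original_field A N F) t a, 1)"
proof -
  obtain x where x: "fwd_solution (original_field A N F) a x"
    using wp unfolding well_posed_def by blast
  have "fwd_solution (augmented_field A N F \<gamma>) (a, 1) (\<lambda>s. (x s, 1))"
    using x N_orth
    by (auto simp: fwd_solution_def original_field_def augmented_field_def
        intro!: has_vector_derivative_Pair)
  then show ?thesis
    using semiflow_eq_solution[OF augmented_well_posed _ t] semiflow_eq_solution[OF wp x t] by simp
qed

lemma augmented_semiflow_fst_bound: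
  assumes b: "norm b \<le> R0" and t: "0 \<le> t"
  shows "norm (fst (semiflow (augmented_field A N F \<gamma>) t b)) \<le> max R0 (norm F / c)"
proof -
  obtain u0 q0 where b_eq: "b = (u0, q0)" by fastforce
  obtain z where z: "fwd_solution (augmented_field A N F \<gamma>) (u0, q0) z"
    using augmented_solution_exists by blast
  have "norm (fst (z t)) \<le> max (norm (fst (z 0))) (norm F / c)"
    by (rule forced_solution_bound[OF augmented_solution_components(2)[OF z] t])
  also have "\<dots> \<le> max R0 (norm F / c)"
    using z b norm_fst_le[of u0 q0] by (auto simp: b_eq fwd_solution_def)
  finally show ?thesis
    using semiflow_eq_solution[OF augmented_well_posed z t]
    by (simp add: b_eq)
qed

lemma augmented_solution_near_original:
  assumes z: "fwd_solution (augmented_field A N F \<gamma>) (u0, q0) z"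
    and v: "fwd_solution (original_field A N F) (fst (z s)) v"
    and R: "norm u0 \<le> R" "norm F / c \<le> R"
    and lip: "L-lipschitz_on (cball 0 R) N" and N_bound: "\<And>v. norm v \<le> R \<Longrightarrow> norm (N v) \<le> M"
    and s: "0 \<le> s" and \<tau>: "0 \<le> \<tau>"
  shows "dist (z (s + \<tau>)) (v \<tau>, 1) \<le> (exp ((2 * L + 1) * \<tau> / 2) * M + 1) * \<bar>q0 - 1\<bar> * exp (- \<gamma> * s)"
proof -
  define u where "u t = fst (z t)" for t
  define \<delta> where "\<delta> = \<bar>q0 - 1\<bar> * exp (- \<gamma> * s)"
  have u_deriv: "(u has_vector_derivative F - A (u t) - q_trajectory \<gamma> q0 t *\<^sub>R N (u t)) (at t within {0..})"
    if "0 \<le> t" for t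
    unfolding u_def by (rule augmented_solution_components(2)[OF z that])
  have u_bound: "norm (u t) \<le> R" if "0 \<le> t" for t
    using forced_solution_bound[OF u_deriv that] z R by (auto simp: u_def fwd_solution_def)
  have v_deriv: "(v has_vector_derivative F - A (v t) - 1 *\<^sub>R N (v t)) (at t within {0..})"
    if "0 \<le> t" for t
    using v that by (simp add: fwd_solution_def original_field_def)
  have v_bound: "norm (v t) \<le> R" if "0 \<le> t" for t
    using forced_solution_bound[OF v_deriv that] u_bound[OF s] v R by (auto simp: u_def fwd_solution_def)
  have q_close: "\<bar>q_trajectory \<gamma> q0 (s + t) - 1\<bar> \<le> \<delta>" if "0 \<le> t" for t
    using gamma_pos that by (simp add: abs_q_trajectory_minus_1 \<delta>_def mult_left_mono)
  have "0 \<le> M"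
    using N_bound[OF R(1)] by (meson norm_ge_zero order_trans)
  have "(norm (u (s + \<tau>) - v \<tau>))\<^sup>2 \<le> exp ((2 * 1 * L + 1) * \<tau>) * ((norm (u (s + 0) - v 0))\<^sup>2 + (\<delta> * M)\<^sup>2)"
    by (rule norm_solution_diff_le[OF bounded_linear.linear[OF A_lin] _
          has_vector_derivative_shift_atLeast_0[OF u_deriv s] v_deriv _ v_bound lip N_bound _ q_close \<tau>])
       (use inner_A_self_nonneg u_bound s in auto)
  also have "\<dots> = (exp ((2 * L + 1) * \<tau> / 2) * \<delta> * M)\<^sup>2"
    using v by (simp add: u_def fwd_solution_def power_mult_distrib exp_double[symmetric])
  finally have "norm (u (s + \<tau>) - v \<tau>) \<le> exp ((2 * L + 1) * \<tau> / 2) * \<delta> * M"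
    by (rule power2_le_imp_le) (simp add: \<delta>_def \<open>0 \<le> M\<close>)
  moreover have "z (s + \<tau>) = (u (s + \<tau>), q_trajectory \<gamma> q0 (s + \<tau>))"
    using augmented_solution_components(1)[OF z] s \<tau> by (simp add: u_def prod_eq_iff)
  then have "dist (z (s + \<tau>)) (v \<tau>, 1) \<le> norm (u (s + \<tau>) - v \<tau>) + \<bar>q_trajectory \<gamma> q0 (s + \<tau>) - 1\<bar>"
    using dist_Pair_le_add[of "u (s + \<tau>)" "q_trajectory \<gamma> q0 (s + \<tau>)" "v \<tau>" 1] by (simp add: dist_norm)
  ultimately have "dist (z (s + \<tau>)) (v \<tau>, 1) \<le> exp ((2 * L + 1) * \<tau> / 2) * \<delta> * M + \<delta>"
    using q_close[OF \<tau>] by linarith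
  then show ?thesis
    by (simp add: \<delta>_def algebra_simps)
qed

lemma augmented_semiflow_tracks_original:
  assumes wp: "well_posed (original_field A N F)" and \<tau>: "0 \<le> \<tau>"
  shows "\<exists>C. \<forall>b s. norm b \<le> R0 \<longrightarrow> 0 \<le> s \<longrightarrow>
    dist (semiflow (augmented_field A N F \<gamma>) (s + \<tau>) b)
         (semiflow (original_field A N F) \<tau> (fst (semiflow (augmented_field A N F \<gamma>) s b)), 1)
      \<le> C * exp (- \<gamma> * s)"
proof -
  define R where "R = max R0 (norm F / c)"
  obtain L where lip: "L-lipschitz_on (cball 0 R) N"
    using locally_lipschitz_imp_lipschitz_on_compact[OF N_loclip compact_cball] by blast
  define M where "M = norm (N 0) + L * R"
  have N_bound: "norm (N v) \<le> M" if "norm v \<le> R" for v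
    unfolding M_def by (rule lipschitz_on_cball_norm_le[OF lip that])
  show ?thesis
  proof (intro exI allI impI)
    fix b :: "'a \<times> real" and s :: real
    assume b: "norm b \<le> R0" and s: "0 \<le> s"
    obtain u0 q0 where b_eq: "b = (u0, q0)" by fastforce
    obtain z where z: "fwd_solution (augmented_field A N F \<gamma>) (u0, q0) z"
      using augmented_solution_exists by blast
    obtain v where v: "fwd_solution (original_field A N F) (fst (z s)) v"
      using wp unfolding well_posed_def by blast
    have "norm u0 \<le> R" "\<bar>q0 - 1\<bar> \<le> R0 + 1"
      using b norm_fst_le[of u0 q0] norm_snd_le[of q0 u0] by (auto simp: b_eq R_def)
    have "0 \<le> M"
      using N_bound[of 0] c_pos by (auto simp: R_def le_max_iff_disj intro: order_trans[OF norm_ge_zero])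
    have "dist (z (s + \<tau>)) (v \<tau>, 1) \<le> (exp ((2 * L + 1) * \<tau> / 2) * M + 1) * \<bar>q0 - 1\<bar> * exp (- \<gamma> * s)"
      by (rule augmented_solution_near_original[OF z v \<open>norm u0 \<le> R\<close> _ lip N_bound s \<tau>])
         (simp add: R_def)
    also have "\<dots> \<le> (exp ((2 * L + 1) * \<tau> / 2) * M + 1) * (R0 + 1) * exp (- \<gamma> * s)"
      using \<open>\<bar>q0 - 1\<bar> \<le> R0 + 1\<close> \<open>0 \<le> M\<close> by (intro mult_right_mono mult_left_mono) auto
    finally have "dist (z (s + \<tau>)) (v \<tau>, 1) \<le> (exp ((2 * L + 1) * \<tau> / 2) * M + 1) * (R0 + 1) * exp (- \<gamma> * s)" .
    moreover have "semiflow (augmented_field A N F \<gamma>) t b = z t" if "0 \<le> t" for t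
      using semiflow_eq_solution[OF augmented_well_posed z that] by (simp add: b_eq)
    ultimately show "dist (semiflow (augmented_field A N F \<gamma>) (s + \<tau>) b)
        (semiflow (original_field A N F) \<tau> (fst (semiflow (augmented_field A N F \<gamma>) s b)), 1)
      \<le> (exp ((2 * L + 1) * \<tau> / 2) * M + 1) * (R0 + 1) * exp (- \<gamma> * s)"
      using semiflow_eq_solution[OF wp v \<tau>] s \<tau> by simp
  qed
qed

lemma augmented_attracts_bounded:
  assumes Att: "global_attractor (original_field A N F) Att" and B: "bounded B" and e: "0 < e"
  shows "\<exists>T. \<forall>t\<ge>T. \<forall>b\<in>B. infdist (semiflow (augmented_field A N F \<gamma>) t b) (Att \<times> {1}) < e"
proof -
  let ?Sa = "semiflow (augmented_field A N F \<gamma>)" and ?So = "semiflow (original_field A N F)"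
  have wp: "well_posed (original_field A N F)"
    and attracts: "\<And>B e. bounded B \<Longrightarrow> 0 < e \<Longrightarrow> \<exists>T. \<forall>t\<ge>T. \<forall>b\<in>B. infdist (?So t b) Att < e"
    using Att unfolding global_attractor_def by auto
  obtain R0 where R0: "\<And>b. b \<in> B \<Longrightarrow> norm b \<le> R0"
    using B by (auto simp: bounded_iff)
  define R where "R = max R0 (norm F / c)"
  have "0 < e / 2" using e by simp
  then obtain T where T: "\<forall>t\<ge>T. \<forall>v\<in>cball 0 R. infdist (?So t v) Att < e / 2"
    using attracts[OF bounded_cball] by blast
  define \<tau> where "\<tau> = max T 0"
  obtain C where C: "\<And>b s. norm b \<le> R0 \<Longrightarrow> 0 \<le> s \<Longrightarrow>
      dist (?Sa (s + \<tau>) b) (?So \<tau> (fst (?Sa s b)), 1) \<le> C * exp (- \<gamma> * s)"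
    using augmented_semiflow_tracks_original[OF wp, of \<tau> R0] by (auto simp: \<tau>_def)
  obtain s0 where s0: "\<forall>s\<ge>s0. C * exp (- \<gamma> * s) < e / 2"
    using exp_decay_eventually_less[OF gamma_pos \<open>0 < e / 2\<close>] by blast
  show ?thesis
  proof (intro exI allI impI ballI)
    fix t b assume t: "max s0 0 + \<tau> \<le> t" and b: "b \<in> B"
    define s where "s = t - \<tau>"
    have "0 \<le> s" "s0 \<le> s" "t = s + \<tau>"
      using t by (auto simp: s_def)
    let ?w = "fst (?Sa s b)"
    have "norm ?w \<le> R"
      unfolding R_def
      by (rule augmented_semiflow_fst_bound[OF R0[OF b] \<open>0 \<le> s\<close>])
    then have "infdist (?So \<tau> ?w, 1::real) (Att \<times> {1}) < e / 2"
      using T by (simp add: infdist_Pair_Times_singleton \<tau>_def)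
    moreover have "dist (?Sa t b) (?So \<tau> ?w, 1) < e / 2"
      using C[OF R0[OF b] \<open>0 \<le> s\<close>] s0 \<open>s0 \<le> s\<close> \<open>t = s + \<tau>\<close> by fastforce
    ultimately have "infdist (?Sa t b) (Att \<times> {1}) < e / 2 + e / 2"
      using infdist_triangle[of "?Sa t b" "Att \<times> {1}" "(?So \<tau> ?w, 1)"] by simp
    then show "infdist (?Sa t b) (Att \<times> {1}) < e" by simp
  qed
qed

end

theorem proposition2:
  fixes A N :: "'a::euclidean_space \<Rightarrow> 'a" and F :: 'a and \<gamma> l0 :: real
    and Att :: "'a set"
  assumes A_lin: "bounded_linear A"
    and A_sym: "symmetric_op A"
    and A_pos: "\<forall>u. u \<noteq> 0 \<longrightarrow> inner (A u) u > 0"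
    and l0_pos: "l0 > 0"
    and coerc: "\<forall>S. bounded_linear S \<and> symmetric_op S \<and> (\<forall>u. inner (S u) u \<ge> 0) \<and> S \<circ> S = A
                  \<longrightarrow> (\<forall>u. (norm (S u))\<^sup>2 \<ge> l0 * (norm u)\<^sup>2)"
    and N_loclip: "\<forall>x. \<exists>r>0. \<exists>L. L-lipschitz_on (cball x r) N"
    and N_orth: "\<forall>u. inner (N u) u = 0"
    and gamma_pos: "\<gamma> > 0"
    and Att: "global_attractor (original_field A N F) Att"
  shows "global_attractor (augmented_field A N F \<gamma>) (Att \<times> {1})"
proof -
  \<comment> \<open>In finite dimension positivity of \<open>A\<close> already gives coercivity (compactness of the unit
    sphere).\<close>
  obtain c where c: "0 < c" "\<forall>u. c * (norm u)\<^sup>2 \<le> inner (A u) u"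
    using positive_definite_imp_coercive[OF bounded_linear.linear[OF A_lin] A_pos] by blast
  note model = A_lin c(2) c(1) N_loclip N_orth gamma_pos
  have wp: "well_posed (original_field A N F)" and "Att \<noteq> {}" "compact Att"
    and invariant: "\<And>t. 0 \<le> t \<Longrightarrow> semiflow (original_field A N F) t ` Att = Att"
    using Att unfolding global_attractor_def by auto
  have "semiflow (augmented_field A N F \<gamma>) t ` (Att \<times> {1}) = Att \<times> {1}" if "0 \<le> t" for t
  proof -
    have "semiflow (augmented_field A N F \<gamma>) t ` (Att \<times> {1})
        = (\<lambda>a. (a, 1)) ` semiflow (original_field A N F) t ` Att"
      using augmented_semiflow_on_line[OF model wp that] by (force simp: image_iff)
    then show ?thesis
      using invariant[OF that] by auto
  qed
  then show ?thesis
    unfolding global_attractor_def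
    using augmented_well_posed[OF model] \<open>Att \<noteq> {}\<close> compact_Times[OF \<open>compact Att\<close> compact_sing]
      augmented_attracts_bounded[OF model Att] by auto
qed

end
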